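(* Let $n\ge 4$ and $a$ be positive integers with $2a\le n$. Then $S_{\mathcal{Q}}(K_{a,n-a})\ge S_{\mathcal{Q}}(K_{\lfloor n/2\rfloor,\lceil n/2\rceil})$, with equality if and only if $K_{a,n-a}\cong K_{\lfloor n/2\rfloor,\lceil n/2\rceil}$ (i.e. $a=\lfloor n/2\rfloor$).
   Context: For a connected graph $G$ with vertex set $\{v_1,\dots,v_n\}$: $\mathcal{D}(G)=(d_G(v_i,v_j))$ is the distance matrix, $D_i=\sum_j d_G(v_i,v_j)$, $Tr(G)=\mathrm{diag}(D_1,\dots,D_n)$, $\mathcal{Q}(G)=Tr(G)+\mathcal{D}(G)$, and $S_{\mathcal{Q}}(G)$ is the difference between the largest and the least eigenvalue of $\mathcal{Q}(G)$. $K_{a,b}$ is the complete bipartite graph with parts of sizes $a,b$. *)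

theory Defs
  imports "Jordan_Normal_Form.Char_Poly"
begin

text \<open>A graph on the vertex set {0..<n} is given by an adjacency relation E.
  A walk of length k from u to v.\<close>
definition walk :: "nat \<Rightarrow> (nat \<Rightarrow> nat \<Rightarrow> bool) \<Rightarrow> nat \<Rightarrow> nat \<Rightarrow> nat \<Rightarrow> bool" where
  "walk n E u v k \<longleftrightarrow> (\<exists>p :: nat \<Rightarrow> nat. p 0 = u \<and> p k = v \<and>
      (\<forall>i\<le>k. p i < n) \<and> (\<forall>i<k. E (p i) (p (Suc i))))"

text \<open>Graph distance d_G(u,v): length of a shortest walk (the graph is connected).\<close>
definition gdist :: "nat \<Rightarrow> (nat \<Rightarrow> nat \<Rightarrow> bool) \<Rightarrow> nat \<Rightarrow> nat \<Rightarrow> nat" where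
  "gdist n E u v = (LEAST k. walk n E u v k)"

definition dist_mat :: "nat \<Rightarrow> (nat \<Rightarrow> nat \<Rightarrow> bool) \<Rightarrow> real mat" where
  "dist_mat n E = mat n n (\<lambda>(i, j). real (gdist n E i j))"

definition trans_mat :: "nat \<Rightarrow> (nat \<Rightarrow> nat \<Rightarrow> bool) \<Rightarrow> real mat" where
  "trans_mat n E = mat n n (\<lambda>(i, j). if i = j then (\<Sum>k<n. real (gdist n E i k)) else 0)"

definition Q_mat :: "nat \<Rightarrow> (nat \<Rightarrow> nat \<Rightarrow> bool) \<Rightarrow> real mat" where
  "Q_mat n E = trans_mat n E + dist_mat n E"

definition SQ :: "nat \<Rightarrow> (nat \<Rightarrow> nat \<Rightarrow> bool) \<Rightarrow> real" where
  "SQ n E = Max {x. eigenvalue (Q_mat n E) x} - Min {x. eigenvalue (Q_mat n E) x}"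

definition Kbip :: "nat \<Rightarrow> nat \<Rightarrow> nat \<Rightarrow> nat \<Rightarrow> bool" where
  "Kbip a b i j \<longleftrightarrow> i < a+b \<and> j < a+b \<and> ((i < a) \<noteq> (j < a))"

end

theory Submission
  imports Defs
begin

text \<open>In \<open>K\<^sub>a\<^sub>,\<^sub>b\<close> (\<open>n = a + b\<close>) two vertices are at distance 1 across the parts and 2 inside
  a part, so \<open>Q\<close> acts on a vector \<open>v\<close> through \<open>v\<close> itself and the two part sums \<open>S\<^sub>A, S\<^sub>B\<close>.
  Vectors with \<open>S\<^sub>A = S\<^sub>B = 0\<close> supported on one part give the eigenvalues \<open>n + a - 4\<close>
  and \<open>2n - a - 4\<close>; vectors constant on each part give the two roots
  \<open>(5n - 8 \<plusminus> s(a))/2\<close> of a quadratic, \<open>s(a) = \<surd>(9(n - 2a)\<^sup>2 + 4a(n - a))\<close>.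
  Hence for \<open>2 \<le> a \<le> n/2\<close> the spread is \<open>(3n - 2a + s(a))/2\<close>, strictly decreasing in \<open>a\<close>
  since \<open>s(a)\<^sup>2\<close> is, while for \<open>a = 1\<close> it is \<open>s(1)\<close>, which a direct estimate shows to be larger
  than the balanced value.\<close>

definition Kbip_dist :: "nat \<Rightarrow> nat \<Rightarrow> nat \<Rightarrow> nat" where
  "Kbip_dist a i j = (if i = j then 0 else if (i < a) = (j < a) then 2 else 1)"

lemma Kbip_iff:
  "a \<le> n \<Longrightarrow> Kbip a (n - a) i j \<longleftrightarrow> i < n \<and> j < n \<and> (i < a) \<noteq> (j < a)"
  by (auto simp: Kbip_def)

lemma walk_0_eq: "walk n E u v 0 \<Longrightarrow> u = v"
  by (auto simp: walk_def)

lemma walk_1_edge: "walk n E u v 1 \<Longrightarrow> E u v"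
  unfolding walk_def by (metis lessI One_nat_def)

lemma gdist_eqI:
  assumes "walk n E u v k" "\<And>m. m < k \<Longrightarrow> \<not> walk n E u v m"
  shows "gdist n E u v = k"
  unfolding gdist_def using assms by (intro Least_equality) (auto simp: not_less[symmetric])

lemma gdist_Kbip:
  assumes "0 < a" "a < n" "i < n" "j < n"
  shows "gdist n (Kbip a (n - a)) i j = Kbip_dist a i j"
proof -
  let ?E = "Kbip a (n - a)"
  have no0: "\<not> walk n ?E i j 0" if "i \<noteq> j" using that walk_0_eq by blast
  consider "i = j" | "i \<noteq> j" "(i < a) \<noteq> (j < a)" | "i \<noteq> j" "(i < a) = (j < a)" by blast
  then show ?thesis
  proof cases
    case 1
    have "walk n ?E i j 0"
      unfolding walk_def using 1 assms by (intro exI[of _ "\<lambda>_. i"]) auto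
    then show ?thesis using 1 by (simp add: gdist_eqI Kbip_dist_def)
  next
    case 2
    have "walk n ?E i j 1"
      unfolding walk_def using 2 assms
      by (intro exI[of _ "\<lambda>k. if k = 0 then i else j"]) (auto simp: Kbip_iff)
    then show ?thesis using 2 no0 by (auto simp: Kbip_dist_def intro!: gdist_eqI)
  next
    case 3
    have "walk n ?E i j 2"
      unfolding walk_def using 3 assms
      by (intro exI[of _ "\<lambda>k. if k = 0 then i else if k = 1 then (if i < a then a else 0) else j"])
         (auto simp: Kbip_iff less_Suc_eq numeral_2_eq_2)
    moreover have "\<not> walk n ?E i j 1"
      using 3 walk_1_edge[of n ?E i j] assms by (auto simp: Kbip_iff)
    ultimately show ?thesis using 3 no0
      by (auto simp: Kbip_dist_def numeral_2_eq_2 less_Suc_eq intro!: gdist_eqI)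
  qed
qed

lemma sum_Kbip_dist_mult:
  fixes w :: "nat \<Rightarrow> real"
  assumes "a \<le> n" "i < n"
  shows "(\<Sum>j<n. real (Kbip_dist a i j) * w j) =
    (if i < a then 2 * (\<Sum>j<a. w j) + (\<Sum>j\<in>{a..<n}. w j)
     else (\<Sum>j<a. w j) + 2 * (\<Sum>j\<in>{a..<n}. w j)) - 2 * w i"
proof -
  define c where "c j = (if (i < a) = (j < a) then 2 else 1 :: real)" for j
  have "(\<Sum>j<n. real (Kbip_dist a i j) * w j) = (\<Sum>j<n. c j * w j - (if i = j then 2 * w j else 0))"
    by (rule sum.cong) (auto simp: Kbip_dist_def c_def)
  also have "\<dots> = (\<Sum>j<n. c j * w j) - 2 * w i"
    using assms by (simp add: sum_subtractf)
  also have "(\<Sum>j<n. c j * w j) = (\<Sum>j<a. c j * w j) + (\<Sum>j\<in>{a..<n}. c j * w j)"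
    unfolding lessThan_atLeast0 by (rule sum.atLeastLessThan_concat[symmetric]) (use assms in auto)
  also have "(\<Sum>j<a. c j * w j) = (if i < a then 2 else 1) * (\<Sum>j<a. w j)"
    by (subst sum_distrib_left) (rule sum.cong, auto simp: c_def)
  also have "(\<Sum>j\<in>{a..<n}. c j * w j) = (if i < a then 1 else 2) * (\<Sum>j\<in>{a..<n}. w j)"
    by (subst sum_distrib_left) (rule sum.cong, auto simp: c_def)
  finally show ?thesis by simp
qed

lemma dim_Q_mat [simp]: "dim_row (Q_mat n E) = n" "dim_col (Q_mat n E) = n"
  by (simp_all add: Q_mat_def trans_mat_def dist_mat_def)

lemma Q_mat_carrier: "Q_mat n E \<in> carrier_mat n n"
  by (rule carrier_matI) simp_all

lemma Q_mat_nth: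
  assumes "i < n" "j < n"
  shows "Q_mat n E $$ (i, j) =
    (if i = j then (\<Sum>k<n. real (gdist n E i k)) else 0) + real (gdist n E i j)"
  using assms by (simp add: Q_mat_def trans_mat_def dist_mat_def)

lemma Q_mat_mult_vec_nth:
  assumes "v \<in> carrier_vec n" "i < n"
  shows "(Q_mat n E *\<^sub>v v) $ i =
    (\<Sum>k<n. real (gdist n E i k)) * v $ i + (\<Sum>j<n. real (gdist n E i j) * v $ j)"
proof -
  have "(Q_mat n E *\<^sub>v v) $ i = (\<Sum>j<n. row (Q_mat n E) i $ j * v $ j)"
    using assms by (simp add: scalar_prod_def lessThan_atLeast0)
  also have "\<dots> = (\<Sum>j<n. (if i = j then (\<Sum>k<n. real (gdist n E i k)) * v $ j else 0)
                         + real (gdist n E i j) * v $ j)"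
    using assms by (intro sum.cong) (simp_all add: Q_mat_nth distrib_right)
  also have "\<dots> = (\<Sum>k<n. real (gdist n E i k)) * v $ i + (\<Sum>j<n. real (gdist n E i j) * v $ j)"
    using assms by (simp add: sum.distrib)
  finally show ?thesis .
qed

lemma Q_Kbip_mult_vec_nth:
  assumes "0 < a" "a < n" "v \<in> carrier_vec n" "i < n"
  shows "(Q_mat n (Kbip a (n - a)) *\<^sub>v v) $ i =
    (if i < a then (real n + real a - 4) * v $ i + 2 * (\<Sum>j<a. v $ j) + (\<Sum>j\<in>{a..<n}. v $ j)
     else (2 * real n - real a - 4) * v $ i + (\<Sum>j<a. v $ j) + 2 * (\<Sum>j\<in>{a..<n}. v $ j))"
proof -
  have "(Q_mat n (Kbip a (n - a)) *\<^sub>v v) $ i =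
      (\<Sum>k<n. real (Kbip_dist a i k) * 1) * v $ i + (\<Sum>j<n. real (Kbip_dist a i j) * v $ j)"
    unfolding Q_mat_mult_vec_nth[OF assms(3,4)] using assms by (simp add: gdist_Kbip)
  then show ?thesis
    unfolding sum_Kbip_dist_mult[OF less_imp_le[OF assms(2)] assms(4)]
    using assms by (simp add: of_nat_diff algebra_simps)
qed

lemma eigenvalue_by_components:
  assumes "A \<in> carrier_mat n n" "v \<in> carrier_vec n" "v \<noteq> 0\<^sub>v n"
    and "\<And>i. i < n \<Longrightarrow> (A *\<^sub>v v) $ i = x * v $ i"
  shows "eigenvalue A x"
proof -
  have "A *\<^sub>v v = x \<cdot>\<^sub>v v"
    using assms by (intro eq_vecI) auto
  then show ?thesis unfolding eigenvalue_def eigenvector_def using assms by auto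
qed

definition Kbip_quadratic :: "nat \<Rightarrow> nat \<Rightarrow> real \<Rightarrow> bool" where
  "Kbip_quadratic n a x \<longleftrightarrow>
     (x - real n - 3 * real a + 4) * (x - 4 * real n + 3 * real a + 4) = real a * (real n - real a)"

lemma eigenvalue_Q_Kbip_cases:
  assumes "0 < a" "a < n" "eigenvalue (Q_mat n (Kbip a (n - a))) x"
  shows "Kbip_quadratic n a x \<or> x = 2 * real n - real a - 4 \<or> (x = real n + real a - 4 \<and> 2 \<le> a)"
proof -
  obtain v where v: "v \<in> carrier_vec n" "v \<noteq> 0\<^sub>v n" "Q_mat n (Kbip a (n - a)) *\<^sub>v v = x \<cdot>\<^sub>v v"
    using assms(3) unfolding eigenvalue_def eigenvector_def by auto
  define SA where "SA = (\<Sum>j<a. v $ j)"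
  define SB where "SB = (\<Sum>j\<in>{a..<n}. v $ j)"
  define p where "p = x - (real n + real a - 4)"
  define q where "q = x - (2 * real n - real a - 4)"
  have eq_i: "x * v $ i = (Q_mat n (Kbip a (n - a)) *\<^sub>v v) $ i" if "i < n" for i
    using v that by simp
  have part_A: "p * v $ i = 2 * SA + SB" if "i < a" for i
    using eq_i[of i] Q_Kbip_mult_vec_nth[OF assms(1,2) v(1), of i] that assms(2)
    by (simp add: p_def SA_def SB_def algebra_simps)
  have part_B: "q * v $ i = SA + 2 * SB" if "a \<le> i" "i < n" for i
    using eq_i[of i] Q_Kbip_mult_vec_nth[OF assms(1,2) v(1), of i] that
    by (simp add: q_def SA_def SB_def algebra_simps)
  have sum_A: "(p - 2 * real a) * SA = real a * SB"
    using sum.cong[OF refl part_A, of "{..<a}"]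
    by (simp add: SA_def sum_distrib_left[symmetric] algebra_simps)
  have sum_B: "(q - 2 * (real n - real a)) * SB = (real n - real a) * SA"
    using sum.cong[OF refl part_B, of "{a..<n}"] assms(2)
    by (simp add: SB_def sum_distrib_left[symmetric] of_nat_diff algebra_simps)
  show ?thesis
  proof (cases "SA = 0 \<and> SB = 0")
    case False
    then have "SA \<noteq> 0" "SB \<noteq> 0"
      using sum_A sum_B assms by auto
    moreover have "((p - 2 * real a) * (q - 2 * (real n - real a))) * (SA * SB)
        = (real a * (real n - real a)) * (SA * SB)"
      using arg_cong2[OF sum_A sum_B, of "(*)"] by (simp add: algebra_simps)
    ultimately have "(p - 2 * real a) * (q - 2 * (real n - real a)) = real a * (real n - real a)"
      by simp
    moreover have "p - 2 * real a = x - real n - 3 * real a + 4"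
      and "q - 2 * (real n - real a) = x - 4 * real n + 3 * real a + 4"
      by (simp_all add: p_def q_def)
    ultimately have "Kbip_quadratic n a x" unfolding Kbip_quadratic_def by metis
    then show ?thesis by simp
  next
    case True
    obtain k where k: "k < n" "v $ k \<noteq> 0"
      using v(1,2) by (metis carrier_vecD eq_vecI index_zero_vec(1,2))
    show ?thesis
    proof (cases "k < a")
      case True
      \<comment> \<open>if \<open>a = 1\<close> then \<open>k = 0\<close> and \<open>v\<^sub>k = S\<^sub>A = 0\<close>\<close>
      then have "a \<noteq> 1" using \<open>SA = 0 \<and> SB = 0\<close> k by (auto simp: SA_def)
      then show ?thesis using part_A[OF True] \<open>SA = 0 \<and> SB = 0\<close> k assms(1) by (simp add: p_def)
    next
      case False
      then show ?thesis using part_B[of k] \<open>SA = 0 \<and> SB = 0\<close> k by (simp add: q_def)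
    qed
  qed
qed

lemma eigenvalue_Q_Kbip_part_A:
  assumes "2 \<le> a" "a < n"
  shows "eigenvalue (Q_mat n (Kbip a (n - a))) (real n + real a - 4)"
proof -
  define v :: "real vec" where "v = vec n (\<lambda>i. if i = 0 then 1 else if i = 1 then -1 else 0)"
  have v: "v \<in> carrier_vec n" by (simp add: v_def)
  have "v \<noteq> 0\<^sub>v n"
  proof
    assume "v = 0\<^sub>v n"
    then have "v $ 0 = 0" using assms by simp
    then show False using assms by (simp add: v_def)
  qed
  have "(\<Sum>j<a. v $ j) = (\<Sum>j<a. (if j = 0 then 1 else 0) + (if j = 1 then -1 else 0 :: real))"
    using assms by (intro sum.cong) (auto simp: v_def)
  then have "(\<Sum>j<a. v $ j) = 0" using assms by (simp add: sum.distrib)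
  moreover have "(\<Sum>j\<in>{a..<n}. v $ j) = 0"
    using assms by (intro sum.neutral) (auto simp: v_def)
  ultimately have "(Q_mat n (Kbip a (n - a)) *\<^sub>v v) $ i = (real n + real a - 4) * v $ i" if "i < n" for i
    using that assms Q_Kbip_mult_vec_nth[of a n v i] v by (simp add: v_def)
  then show ?thesis by (rule eigenvalue_by_components[OF Q_mat_carrier v \<open>v \<noteq> 0\<^sub>v n\<close>])
qed

lemma eigenvalue_Q_Kbip_quadratic:
  assumes "0 < a" "a < n" "Kbip_quadratic n a x"
  shows "eigenvalue (Q_mat n (Kbip a (n - a))) x"
proof -
  define t where "t = x - real n - 3 * real a + 4"
  define v :: "real vec" where "v = vec n (\<lambda>i. if i < a then real n - real a else t)"
  have v: "v \<in> carrier_vec n" by (simp add: v_def)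
  have "v \<noteq> 0\<^sub>v n"
  proof
    assume "v = 0\<^sub>v n"
    then have "v $ 0 = 0" using assms by simp
    then show False using assms by (simp add: v_def)
  qed
  have SA: "(\<Sum>j<a. v $ j) = real a * (real n - real a)"
    using assms by (simp add: v_def)
  have SB: "(\<Sum>j\<in>{a..<n}. v $ j) = (real n - real a) * t"
    using assms by (simp add: v_def of_nat_diff)
  have "t * (x - 4 * real n + 3 * real a + 4) = real a * (real n - real a)"
    using assms(3) by (simp add: Kbip_quadratic_def t_def)
  then have "(Q_mat n (Kbip a (n - a)) *\<^sub>v v) $ i = x * v $ i" if "i < n" for i
    using that assms(1,2) Q_Kbip_mult_vec_nth[of a n v i] v
    by (simp add: SA SB) (auto simp: v_def t_def algebra_simps)
  then show ?thesis by (rule eigenvalue_by_components[OF Q_mat_carrier v \<open>v \<noteq> 0\<^sub>v n\<close>])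
qed

definition Kbip_root :: "nat \<Rightarrow> nat \<Rightarrow> real" where
  "Kbip_root n a = sqrt (9 * (real n - 2 * real a)\<^sup>2 + 4 * real a * (real n - real a))"

lemma Kbip_root_nonneg: "a \<le> n \<Longrightarrow> 0 \<le> Kbip_root n a"
  by (simp add: Kbip_root_def)

lemma Kbip_quadratic_iff:
  assumes "a \<le> n"
  shows "Kbip_quadratic n a x \<longleftrightarrow>
    x = (5 * real n - 8 + Kbip_root n a) / 2 \<or> x = (5 * real n - 8 - Kbip_root n a) / 2"
proof -
  have "(Kbip_root n a)\<^sup>2 = 9 * (real n - 2 * real a)\<^sup>2 + 4 * real a * (real n - real a)"
    unfolding Kbip_root_def using assms by simp
  then have "Kbip_quadratic n a x \<longleftrightarrow> (2 * x - (5 * real n - 8))\<^sup>2 = (Kbip_root n a)\<^sup>2"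
    unfolding Kbip_quadratic_def by (simp add: power2_eq_square algebra_simps) (auto simp: algebra_simps)
  also have "\<dots> \<longleftrightarrow> x = (5 * real n - 8 + Kbip_root n a) / 2 \<or> x = (5 * real n - 8 - Kbip_root n a) / 2"
    by (auto simp: power2_eq_iff field_simps)
  finally show ?thesis .
qed

lemma SQ_Kbip:
  assumes "1 \<le> a" "2 * a \<le> n" "4 \<le> n"
  shows "SQ n (Kbip a (n - a)) =
    (if a = 1 then Kbip_root n a else (3 * real n - 2 * real a + Kbip_root n a) / 2)"
proof -
  have "0 < a" "a < n" "a \<le> n" using assms by simp_all
  let ?S = "{x. eigenvalue (Q_mat n (Kbip a (n - a))) x}"
  let ?top = "(5 * real n - 8 + Kbip_root n a) / 2"
  let ?bot = "(5 * real n - 8 - Kbip_root n a) / 2"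
  have r: "0 \<le> Kbip_root n a" using Kbip_root_nonneg[OF \<open>a \<le> n\<close>] .
  have S: "?S \<subseteq> {?top, ?bot, 2 * real n - real a - 4} \<union> (if 2 \<le> a then {real n + real a - 4} else {})"
  proof
    fix x assume "x \<in> ?S"
    then have "Kbip_quadratic n a x \<or> x = 2 * real n - real a - 4 \<or> (x = real n + real a - 4 \<and> 2 \<le> a)"
      using eigenvalue_Q_Kbip_cases[OF \<open>0 < a\<close> \<open>a < n\<close>] by simp
    then show "x \<in> {?top, ?bot, 2 * real n - real a - 4} \<union> (if 2 \<le> a then {real n + real a - 4} else {})"
      using Kbip_quadratic_iff[OF \<open>a \<le> n\<close>] by auto
  qed
  have quad_in_S: "?top \<in> ?S" "?bot \<in> ?S"
    using eigenvalue_Q_Kbip_quadratic[OF \<open>0 < a\<close> \<open>a < n\<close>] Kbip_quadratic_iff[OF \<open>a \<le> n\<close>] by auto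
  have "finite ?S" by (rule finite_subset[OF S]) auto
  have max: "Max ?S = ?top"
    using S r assms by (intro Max_eqI[OF \<open>finite ?S\<close> _ quad_in_S(1)]) (auto split: if_splits)
  show ?thesis
  proof (cases "a = 1")
    case True
    have "0 \<le> (2 * real n - 7) * (real n - 1)"
      using assms(3) by (intro mult_nonneg_nonneg) simp_all
    then have "real n + 2 \<le> Kbip_root n a"
      unfolding Kbip_root_def using True
      by (intro real_le_rsqrt) (simp add: power2_eq_square algebra_simps)
    then have "Min ?S = ?bot"
      using S r True by (intro Min_eqI[OF \<open>finite ?S\<close> _ quad_in_S(2)]) auto
    then show ?thesis unfolding SQ_def max using True by (simp add: field_simps)
  next
    case False
    have "0 \<le> real a * (5 * real n - 7 * real a)"
      using assms(2) by (intro mult_nonneg_nonneg) simp_all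
    then have "Kbip_root n a \<le> 3 * real n - 2 * real a"
      unfolding Kbip_root_def using assms(2)
      by (intro real_le_lsqrt) (simp_all add: power2_eq_square algebra_simps)
    then have "Min ?S = real n + real a - 4"
      using S r False assms \<open>a < n\<close> eigenvalue_Q_Kbip_part_A[of a n]
      by (intro Min_eqI[OF \<open>finite ?S\<close>]) auto
    then show ?thesis unfolding SQ_def max using False by (simp add: field_simps)
  qed
qed

lemma Kbip_root_less:
  assumes "a < b" "a + b < n"
  shows "Kbip_root n b < Kbip_root n a"
proof -
  have "(9 * (real n - 2 * real a)\<^sup>2 + 4 * real a * (real n - real a))
      - (9 * (real n - 2 * real b)\<^sup>2 + 4 * real b * (real n - real b))
      = 32 * (real b - real a) * (real n - real a - real b)"
    by (simp add: power2_eq_square algebra_simps)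
  moreover have "0 < 32 * (real b - real a) * (real n - real a - real b)"
    using assms by simp
  ultimately show ?thesis unfolding Kbip_root_def by simp
qed

lemma balanced_spread_less_Kbip_root_1:
  assumes "4 \<le> n"
  shows "(3 * real n - 2 * real (n div 2) + Kbip_root n (n div 2)) / 2 < Kbip_root n 1"
proof (cases "even n")
  case True
  then have "real n = 2 * real (n div 2)"
    by (metis even_two_times_div_two of_nat_mult of_nat_numeral)
  then have "Kbip_root n (n div 2) = real n"
    by (simp add: Kbip_root_def power2_eq_square algebra_simps real_sqrt_mult)
  moreover have "3 * real n / 2 < Kbip_root n 1"
    unfolding Kbip_root_def
  proof (rule real_less_rsqrt)
    have "0 \<le> 27 * (real n - 4)\<^sup>2 + 88 * (real n - 4)" using assms by simp
    then show "(3 * real n / 2)\<^sup>2 < 9 * (real n - 2 * real 1)\<^sup>2 + 4 * real 1 * (real n - real 1)"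
      by (simp add: power2_eq_square field_simps)
  qed
  ultimately show ?thesis using \<open>real n = 2 * real (n div 2)\<close> by simp
next
  case False
  have n: "real n = 2 * real (n div 2) + 1" "5 \<le> n"
    using False assms
    by (metis odd_two_times_div_two_succ of_nat_Suc of_nat_mult of_nat_numeral Suc_eq_plus1 add.commute,
        presburger)
  have "Kbip_root n (n div 2) \<le> real n + 1"
    unfolding Kbip_root_def using n
    by (intro real_le_lsqrt) (simp_all add: power2_eq_square algebra_simps)
  moreover have "(3 * real n + 2) / 2 < Kbip_root n 1"
    unfolding Kbip_root_def
  proof (rule real_less_rsqrt)
    have "0 \<le> 27 * (real n - 5)\<^sup>2 + 130 * (real n - 5)" using n(2) by simp
    then show "((3 * real n + 2) / 2)\<^sup>2 < 9 * (real n - 2 * real 1)\<^sup>2 + 4 * real 1 * (real n - real 1)"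
      by (simp add: power2_eq_square field_simps)
  qed
  ultimately show ?thesis using n by simp
qed

lemma SQ_Kbip_gt_balanced:
  assumes "1 \<le> a" "a < n div 2" "4 \<le> n"
  shows "SQ n (Kbip (n div 2) (n - n div 2)) < SQ n (Kbip a (n - a))"
proof -
  have "2 \<le> n div 2" using assms(3) by presburger
  have balanced: "SQ n (Kbip (n div 2) (n - n div 2))
      = (3 * real n - 2 * real (n div 2) + Kbip_root n (n div 2)) / 2"
    using SQ_Kbip[of "n div 2" n] \<open>2 \<le> n div 2\<close> assms(3) by simp
  show ?thesis
  proof (cases "a = 1")
    case True
    then show ?thesis
      using SQ_Kbip[of a n] balanced balanced_spread_less_Kbip_root_1[OF assms(3)] assms by simp
  next
    case False
    have "Kbip_root n (n div 2) < Kbip_root n a"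
      using assms by (intro Kbip_root_less) auto
    moreover have "2 * a \<le> n" "real a < real (n div 2)"
      using assms(2) by simp_all
    ultimately show ?thesis
      using SQ_Kbip[of a n] balanced False assms by simp
  qed
qed

theorem lemma4p3:
  fixes n a :: nat
  assumes "n \<ge> 4" and "a \<ge> 1" and "2 * a \<le> n"
  shows "SQ n (Kbip a (n - a)) \<ge> SQ n (Kbip (n div 2) (n - n div 2))
         \<and> (SQ n (Kbip a (n - a)) = SQ n (Kbip (n div 2) (n - n div 2)) \<longleftrightarrow> a = n div 2)"
proof (cases "a = n div 2")
  case False
  then have "a < n div 2" using assms(3) by linarith
  then show ?thesis using SQ_Kbip_gt_balanced[of a n] False assms by simp
qed simp

end
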